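(* Let $n>2k$ be integers and let $A\in\mathscr F_k^5$ satisfy, for all $\alpha\in\mathscr I_{k-1}^5$, $$(n+2k-4\alpha_3-4)A_{\alpha+\vec e_3}=(n+2k-4\alpha_4-4)A_{\alpha+\vec e_4},$$ $$(n+2k-4\alpha_5-4)A_{\alpha+\vec e_5}=(n+2k-4\alpha_1-4)A_{\alpha+\vec e_1},$$ $$(n+2k-4\alpha_3-4)A_{\alpha+\vec e_3}=(n+2k-4\alpha_1-4)A_{\alpha+\vec e_1}-4(\alpha_1-\alpha_3-\alpha_4+\alpha_5)A_{\alpha+\vec e_2}.$$ Let $\alpha\in\mathscr I_k^5$ with $\alpha_4=\alpha_5$. Then $A_\alpha=A_{\alpha'}$, where $\alpha':=(\alpha_3,\alpha_2,\alpha_1,\alpha_5,\alpha_4)$.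
   Context: Notation: $\mathscr I_k^\ell:=\{\alpha\in\mathbb N_0^\ell:\alpha_1+\cdots+\alpha_\ell=k\}$; $\mathscr F_k^\ell$ is the real vector space of functions $A:\mathscr I_k^\ell\to\mathbb R$, $A_\alpha:=A(\alpha)$; $\vec e_j\in\mathbb N_0^\ell$ is the tuple with $1$ in slot $j$ and $0$ elsewhere. *)

theory Defs
  imports Main Complex_Main
begin

end

theory Submission
  imports Defs
begin

(* Rescaling A by the products of the coefficients c j = n + 2k - 4j - 4, which are nonzero
   for j < k because n > 2k, turns the first two relations into shift invariances: the
   rescaled array depends only on (a1 + a5, a2, a3 + a4).  On this reduced array G the third
   relation reads G p r (q + 1) = G (p + 1) r q - 4 (p - q) G p (r + 1) q, and downward
   induction on r, with an induction on |p - q| in steps of two inside each layer, shows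
   G p r q = G q r p.  This is the claim. *)

definition rescaled ::
    "(nat \<Rightarrow> 'a::comm_monoid_mult) \<Rightarrow> (nat \<Rightarrow> nat \<Rightarrow> nat \<Rightarrow> nat \<Rightarrow> nat \<Rightarrow> 'a)
      \<Rightarrow> nat \<Rightarrow> nat \<Rightarrow> nat \<Rightarrow> nat \<Rightarrow> nat \<Rightarrow> 'a" where
  "rescaled c A a1 a2 a3 a4 a5 =
    (\<Prod>j<a1. c j) * (\<Prod>j<a3. c j) * (\<Prod>j<a4. c j) * (\<Prod>j<a5. c j) * A a1 a2 a3 a4 a5"

lemma rescaled_shift_34:
  fixes c :: "nat \<Rightarrow> 'a::comm_semiring_1"
  assumes "c a3 * A a1 a2 (a3 + 1) a4 a5 = c a4 * A a1 a2 a3 (a4 + 1) a5"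
  shows "rescaled c A a1 a2 (a3 + 1) a4 a5 = rescaled c A a1 a2 a3 (a4 + 1) a5"
  using arg_cong[OF assms,
      of "(*) ((\<Prod>j<a1. c j) * (\<Prod>j<a3. c j) * (\<Prod>j<a4. c j) * (\<Prod>j<a5. c j))"]
  by (simp add: rescaled_def ac_simps)

lemma rescaled_shift_51:
  fixes c :: "nat \<Rightarrow> 'a::comm_semiring_1"
  assumes "c a5 * A a1 a2 a3 a4 (a5 + 1) = c a1 * A (a1 + 1) a2 a3 a4 a5"
  shows "rescaled c A a1 a2 a3 a4 (a5 + 1) = rescaled c A (a1 + 1) a2 a3 a4 a5"
  using arg_cong[OF assms,
      of "(*) ((\<Prod>j<a1. c j) * (\<Prod>j<a3. c j) * (\<Prod>j<a4. c j) * (\<Prod>j<a5. c j))"]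
  by (simp add: rescaled_def ac_simps)

lemma rescaled_shift_31:
  fixes c :: "nat \<Rightarrow> 'a::comm_ring_1"
  assumes "c a3 * A a1 a2 (a3 + 1) a4 a5
    = c a1 * A (a1 + 1) a2 a3 a4 a5 - t * A a1 (a2 + 1) a3 a4 a5"
  shows "rescaled c A a1 a2 (a3 + 1) a4 a5
    = rescaled c A (a1 + 1) a2 a3 a4 a5 - t * rescaled c A a1 (a2 + 1) a3 a4 a5"
  using arg_cong[OF assms,
      of "(*) ((\<Prod>j<a1. c j) * (\<Prod>j<a3. c j) * (\<Prod>j<a4. c j) * (\<Prod>j<a5. c j))"]
  by (simp add: rescaled_def algebra_simps)

lemma rescaled_swap_cancel:
  fixes c :: "nat \<Rightarrow> 'a::idom"
  assumes c_nonzero: "\<And>j. j < k \<Longrightarrow> c j \<noteq> 0"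
    and layer: "a1 + a2 + a3 + a4 + a5 = k"
    and "rescaled c A a1 a2 a3 a4 a5 = rescaled c A a3 a2 a1 a5 a4"
  shows "A a1 a2 a3 a4 a5 = A a3 a2 a1 a5 a4"
proof -
  define W where "W = (\<Prod>j<a1. c j) * (\<Prod>j<a3. c j) * (\<Prod>j<a4. c j) * (\<Prod>j<a5. c j)"
  have "W \<noteq> 0"
    using c_nonzero layer by (simp add: W_def)
  moreover have "W * A a1 a2 a3 a4 a5 = W * A a3 a2 a1 a5 a4"
    using assms(3) by (simp add: rescaled_def W_def ac_simps)
  ultimately show ?thesis
    by simp
qed

lemma shift_invariant_collapse:
  fixes F :: "nat \<Rightarrow> nat \<Rightarrow> 'a"
  assumes shift: "\<And>x y. s + x + y + 1 = m \<Longrightarrow> F (x + 1) y = F x (y + 1)"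
  shows "s + x + y = m \<Longrightarrow> F x y = F (x + y) 0"
proof (induction y arbitrary: x)
  case 0
  then show ?case by simp
next
  case (Suc y)
  then have "F x (Suc y) = F (x + 1) y"
    using shift[of x y] by simp
  also have "\<dots> = F (x + Suc y) 0"
    using Suc.IH[of "x + 1"] Suc.prems by simp
  finally show ?case .
qed

lemma collapse_to_pair_sums:
  fixes B :: "nat \<Rightarrow> nat \<Rightarrow> nat \<Rightarrow> nat \<Rightarrow> nat \<Rightarrow> 'a"
  assumes shift_34: "\<And>x1 x2 x3 x4 x5. x1 + x2 + x3 + x4 + x5 + 1 = k \<Longrightarrow>
      B x1 x2 (x3 + 1) x4 x5 = B x1 x2 x3 (x4 + 1) x5"
    and shift_51: "\<And>x1 x2 x3 x4 x5. x1 + x2 + x3 + x4 + x5 + 1 = k \<Longrightarrow>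
      B (x1 + 1) x2 x3 x4 x5 = B x1 x2 x3 x4 (x5 + 1)"
    and layer: "a1 + a2 + a3 + a4 + a5 = k"
  shows "B a1 a2 a3 a4 a5 = B (a1 + a5) a2 (a3 + a4) 0 0"
proof -
  have "B a1 a2 a3 a4 a5 = B a1 a2 (a3 + a4) 0 a5"
  proof (rule shift_invariant_collapse[where s = "a1 + a2 + a5" and m = k])
    show "B a1 a2 (x + 1) y a5 = B a1 a2 x (y + 1) a5"
      if "a1 + a2 + a5 + x + y + 1 = k" for x y
      using shift_34[of a1 a2 x y a5] that by simp
  qed (use layer in simp)
  also have "\<dots> = B (a1 + a5) a2 (a3 + a4) 0 0"
  proof (rule shift_invariant_collapse[where s = "a2 + (a3 + a4)" and m = k])
    show "B (x + 1) a2 (a3 + a4) 0 y = B x a2 (a3 + a4) 0 (y + 1)"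
      if "a2 + (a3 + a4) + x + y + 1 = k" for x y
      using shift_51[of x a2 "a3 + a4" 0 y] that by simp
  qed (use layer in simp)
  finally show ?thesis .
qed

lemma recurrence_antisym_part_shift:
  fixes G :: "nat \<Rightarrow> nat \<Rightarrow> nat \<Rightarrow> 'a::ring" and w :: "nat \<Rightarrow> 'a"
  assumes rec: "\<And>p r q. p + r + q + 1 = k \<Longrightarrow>
      G p r (q + 1) = G (p + 1) r q - (w p - w q) * G p (r + 1) q"
    and sym_above: "G a (r + 1) b = G b (r + 1) a"
    and layer: "a + r + b + 1 = k"
  shows "G a r (b + 1) - G (b + 1) r a = G (a + 1) r b - G b r (a + 1)"
proof -
  have "G b r (a + 1) = G (b + 1) r a - (w b - w a) * G a (r + 1) b"
    using rec[of b r a] sym_above layer by (simp add: ac_simps)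
  then show ?thesis
    unfolding rec[OF layer] by (simp add: algebra_simps)
qed

lemma recurrence_symmetric_on_layer:
  fixes G :: "nat \<Rightarrow> nat \<Rightarrow> nat \<Rightarrow> 'a::ring" and w :: "nat \<Rightarrow> 'a"
  assumes rec: "\<And>p r q. p + r + q + 1 = k \<Longrightarrow>
      G p r (q + 1) = G (p + 1) r q - (w p - w q) * G p (r + 1) q"
    and sym_above: "\<And>p q. p + (r + 1) + q = k \<Longrightarrow> G p (r + 1) q = G q (r + 1) p"
  shows "a + r + (a + d) = k \<Longrightarrow> G a r (a + d) = G (a + d) r a"
proof (induction d arbitrary: a rule: induct_nat_012)
  case 0
  then show ?case by simp
next
  case 1
  then show ?case using rec[of a r a] by simp
next
  case (ge2 d)
  have layer: "a + r + (a + d + 1) + 1 = k"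
    using ge2.prems by simp
  have sym: "G a (r + 1) (a + d + 1) = G (a + d + 1) (r + 1) a"
    using sym_above layer by simp
  have "G a r (a + d + 1 + 1) - G (a + d + 1 + 1) r a
      = G (a + 1) r (a + 1 + d) - G (a + 1 + d) r (a + 1)"
    using recurrence_antisym_part_shift[OF rec sym layer]
    by (simp add: ac_simps)
  also have "\<dots> = 0"
    using ge2.IH(1)[of "a + 1"] ge2.prems by simp
  finally show ?case
    by (simp add: ac_simps)
qed

lemma recurrence_symmetric:
  fixes G :: "nat \<Rightarrow> nat \<Rightarrow> nat \<Rightarrow> 'a::ring" and w :: "nat \<Rightarrow> 'a"
  assumes rec: "\<And>p r q. p + r + q + 1 = k \<Longrightarrow>
      G p r (q + 1) = G (p + 1) r q - (w p - w q) * G p (r + 1) q"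
  shows "p + r + q = k \<Longrightarrow> G p r q = G q r p"
proof (induction "k - r" arbitrary: r p q)
  case 0
  then have "p = 0" "q = 0"
    by auto
  then show ?case by simp
next
  case (Suc t)
  have sym_above: "G p (r + 1) q = G q (r + 1) p" if "p + (r + 1) + q = k" for p q
    using Suc.hyps(1)[of "r + 1"] Suc.hyps(2) that by simp
  show ?case
  proof (cases "p \<le> q")
    case True
    then obtain d where "q = p + d"
      using le_Suc_ex by blast
    then show ?thesis
      using recurrence_symmetric_on_layer[of k G w r p d, OF rec sym_above] Suc.prems by simp
  next
    case False
    then obtain d where "p = q + d"
      using le_Suc_ex[of q p] by auto
    then show ?thesis
      using recurrence_symmetric_on_layer[of k G w r q d, OF rec sym_above] Suc.prems by simp
  qed
qed

theorem lemma4p3: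
  fixes n :: int and k :: nat
    and A :: "nat \<Rightarrow> nat \<Rightarrow> nat \<Rightarrow> nat \<Rightarrow> nat \<Rightarrow> real"
  assumes nk: "n > 2 * int k"
    and h1: "\<And>a1 a2 a3 a4 a5. a1 + a2 + a3 + a4 + a5 + 1 = k \<Longrightarrow>
      (real_of_int n + 2 * real k - 4 * real a3 - 4) * A a1 a2 (a3 + 1) a4 a5
      = (real_of_int n + 2 * real k - 4 * real a4 - 4) * A a1 a2 a3 (a4 + 1) a5"
    and h2: "\<And>a1 a2 a3 a4 a5. a1 + a2 + a3 + a4 + a5 + 1 = k \<Longrightarrow>
      (real_of_int n + 2 * real k - 4 * real a5 - 4) * A a1 a2 a3 a4 (a5 + 1)
      = (real_of_int n + 2 * real k - 4 * real a1 - 4) * A (a1 + 1) a2 a3 a4 a5"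
    and h3: "\<And>a1 a2 a3 a4 a5. a1 + a2 + a3 + a4 + a5 + 1 = k \<Longrightarrow>
      (real_of_int n + 2 * real k - 4 * real a3 - 4) * A a1 a2 (a3 + 1) a4 a5
      = (real_of_int n + 2 * real k - 4 * real a1 - 4) * A (a1 + 1) a2 a3 a4 a5
        - 4 * (real a1 - real a3 - real a4 + real a5) * A a1 (a2 + 1) a3 a4 a5"
    and alpha: "a1 + a2 + a3 + a4 + a5 = k"
    and eq45: "a4 = a5"
  shows "A a1 a2 a3 a4 a5 = A a3 a2 a1 a5 a4"
proof -
  define c where "c j = real_of_int n + 2 * real k - 4 * real j - 4" for j
  define B where "B = rescaled c A"
  have shift_34: "B x1 x2 (x3 + 1) x4 x5 = B x1 x2 x3 (x4 + 1) x5"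
    if "x1 + x2 + x3 + x4 + x5 + 1 = k" for x1 x2 x3 x4 x5
    unfolding B_def using h1[OF that] by (intro rescaled_shift_34) (simp add: c_def)
  have shift_51: "B (x1 + 1) x2 x3 x4 x5 = B x1 x2 x3 x4 (x5 + 1)"
    if "x1 + x2 + x3 + x4 + x5 + 1 = k" for x1 x2 x3 x4 x5
    unfolding B_def using h2[OF that] by (intro rescaled_shift_51[symmetric]) (simp add: c_def)
  have rec: "B p r (q + 1) 0 0
      = B (p + 1) r q 0 0 - (4 * real p - 4 * real q) * B p (r + 1) q 0 0"
    if "p + r + q + 1 = k" for p r q
    unfolding B_def using h3[of p r q 0 0] that
    by (intro rescaled_shift_31) (simp add: c_def algebra_simps)
  have "B (a1 + a5) a2 (a3 + a4) 0 0 = B (a3 + a4) a2 (a1 + a5) 0 0"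
    using recurrence_symmetric[of k "\<lambda>p r q. B p r q 0 0" "\<lambda>p. 4 * real p", OF rec] alpha
    by simp
  moreover have "B x1 x2 x3 x4 x5 = B (x1 + x5) x2 (x3 + x4) 0 0"
    if "x1 + x2 + x3 + x4 + x5 = k" for x1 x2 x3 x4 x5
    using shift_34 shift_51 that by (rule collapse_to_pair_sums)
  ultimately have "B a1 a2 a3 a4 a5 = B a3 a2 a1 a5 a4"
    using alpha by (metis add.commute add.left_commute)
  moreover have "c j \<noteq> 0" if "j < k" for j
    using nk that unfolding c_def by linarith
  ultimately show ?thesis
    using rescaled_swap_cancel alpha unfolding B_def by blast
qed

end
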